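(* Let $\gamma<1$ and suppose that $$\lim_{x\uparrow\infty}\frac{u_0'(x)}{x^{\gamma-1}}=1.$$ Then, for each $t_0\ge 0$, $$\lim_{x\uparrow\infty}\frac{r(x,t_0)}{x}=\frac{1}{1-\gamma}.$$
   Context: Let $\mu$ be a nonzero finite positive Borel measure on $(0,\infty)$ such that $\int y e^{yz}\mu(dy)<\infty$ for every $z\in\mathbb{R}$. Define $h(z,t):=\int e^{yz-\frac12 y^2 t}\mu(dy)$ for $(z,t)\in\mathbb{R}\times[0,\infty)$. For each $t$, the map $z\mapsto h(z,t)$ is smooth and strictly increasing with range $(0,\infty)$. Let $h^{(-1)}(x,t)$ denote its inverse in $z$. Let $u:(0,\infty)\times[0,\infty)\to\mathbb{R}$ be smooth, strictly increasing and strictly concave in $x$, solving $u_t=\frac12 u_x^2/u_{xx}$, and related to $h$ by $u_x(h(z,t),t)=e^{-z+t/2}$ for all $(z,t)$. Write $u_0(x):=u(x,0)$. The risk tolerance function is $r(x,t):=-u_x(x,t)/u_{xx}(x,t)$. Equivalently, $r(x,t)=h_z(h^{(-1)}(x,t),t)$. *)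

theory Defs
  imports "HOL-Probability.Probability"
begin

definition hfun :: "real measure \<Rightarrow> real \<Rightarrow> real \<Rightarrow> real" where
  "hfun \<mu> z t = (\<integral>y. exp (y * z - y\<^sup>2 * t / 2) \<partial>\<mu>)"

definition strictly_concave_on :: "real set \<Rightarrow> (real \<Rightarrow> real) \<Rightarrow> bool" where
  "strictly_concave_on S f \<longleftrightarrow>
     (\<forall>x\<in>S. \<forall>y\<in>S. x \<noteq> y \<longrightarrow> (\<forall>a::real. 0 < a \<and> a < 1 \<longrightarrow>
        f (a * x + (1 - a) * y) > a * f x + (1 - a) * f y))"

end

theory Submission
  imports Defs "HOL-Real_Asymp.Real_Asymp"
begin

text \<open>Differentiating \<open>u\<^sub>x (h (z, t), t) = exp (t/2 - z)\<close> in \<open>z\<close> gives \<open>r (h (z, t), t) = h\<^sub>z (z, t)\<close>,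
  so along \<open>x = h (z, t)\<close> the ratio \<open>r / x\<close> is \<open>h\<^sub>z / h\<close>, the mean of \<open>y\<close> under the
  probability weights proportional to \<open>exp (y z - y\<^sup>2 t / 2) \<mu>(dy)\<close>. As \<open>z \<rightarrow> \<infinity>\<close> these weights
  concentrate at the top of the support of \<open>\<mu>\<close> whenever that top is an atom. The hypothesis on
  \<open>u\<^sub>0\<close> says \<open>h (z, 0) \<sim> exp (c z)\<close> with \<open>c = 1 / (1 - \<gamma>)\<close>, i.e. \<open>\<integral> exp ((y - c) z) \<mu>(dy) \<rightarrow> 1\<close>;
  any mass above \<open>c\<close> would make this integral blow up, and dominated convergence then identifies
  the limit as \<open>\<mu>{c}\<close>. So \<open>\<mu>\<close> lives on \<open>(0, c]\<close> with an atom at \<open>c\<close>, and \<open>r / x \<rightarrow> c\<close> for every \<open>t\<close>.\<close>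

lemma abs_exp_diff_le:
  fixes p q :: real
  shows "\<bar>exp p - exp q\<bar> \<le> \<bar>p - q\<bar> * exp (max p q)"
proof -
  have key: "exp b - exp a \<le> (b - a) * exp b" if "a \<le> b" for a b :: real
  proof -
    have "1 - exp (a - b) \<le> b - a"
      using exp_ge_add_one_self[of "a - b"] by linarith
    then have "exp b * (1 - exp (a - b)) \<le> exp b * (b - a)"
      by (intro mult_left_mono) auto
    then show ?thesis
      by (simp add: algebra_simps exp_diff)
  qed
  show ?thesis
    using key[of q p] key[of p q] by (cases "q \<le> p") (auto simp: max_def abs_minus_commute)
qed

lemma exp_difference_quotient_bound:
  fixes y t w z M :: real
  assumes "0 \<le> y" "0 \<le> t" "w \<le> M" "z \<le> M" "w \<noteq> z"
  shows "\<bar>(exp (y * w - y\<^sup>2 * t / 2) - exp (y * z - y\<^sup>2 * t / 2)) / (w - z)\<bar>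
           \<le> y * exp (y * M)"
proof -
  let ?p = "y * w - y\<^sup>2 * t / 2" and ?r = "y * z - y\<^sup>2 * t / 2"
  have "y * w \<le> y * M" "y * z \<le> y * M" "0 \<le> y\<^sup>2 * t / 2"
    using assms by (auto intro!: mult_left_mono)
  then have max: "max ?p ?r \<le> y * M"
    by simp
  have diff: "\<bar>?p - ?r\<bar> = y * \<bar>w - z\<bar>"
    using assms(1) by (simp add: abs_mult flip: right_diff_distrib)
  have "\<bar>exp ?p - exp ?r\<bar> \<le> \<bar>?p - ?r\<bar> * exp (max ?p ?r)"
    by (rule abs_exp_diff_le)
  also have "\<dots> \<le> y * \<bar>w - z\<bar> * exp (y * M)"
    unfolding diff using max assms(1) by (intro mult_left_mono) auto
  finally show ?thesis
    using assms(5) by (simp add: pos_divide_le_eq mult_ac)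
qed

lemma tendsto_at_top_reparametrize:
  fixes H g f :: "real \<Rightarrow> real"
  assumes cont: "continuous_on UNIV H" and mono: "mono H"
    and top: "filterlim H at_top at_top"
    and lim: "(g \<longlongrightarrow> L) at_top"
    and comp: "\<And>z. f (H z) = g z"
  shows "(f \<longlongrightarrow> L) at_top"
proof -
  have "\<exists>z. H z = x" if "H 0 \<le> x" for x
  proof -
    obtain b where "H b \<ge> x" "b \<ge> 0"
      using top unfolding filterlim_at_top eventually_at_top_linorder
      by (metis linorder_le_cases order.refl)
    then show ?thesis
      using IVT'[of H 0 x b] that cont by (auto intro: continuous_on_subset)
  qed
  then obtain Z where Z: "\<And>x. H 0 \<le> x \<Longrightarrow> H (Z x) = x"
    by metis
  have "filterlim Z at_top at_top"
    unfolding filterlim_at_top eventually_at_top_linorder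
  proof (intro allI exI[of _ "max (H 0) (H B + 1)" for B] impI)
    fix B x assume x: "max (H 0) (H B + 1) \<le> x"
    show "B \<le> Z x"
    proof (rule ccontr)
      assume "\<not> B \<le> Z x"
      then have "H (Z x) \<le> H B" by (intro monoD[OF mono]) simp
      then show False using Z[of x] x by simp
    qed
  qed
  then have "((\<lambda>x. g (Z x)) \<longlongrightarrow> L) at_top"
    by (rule filterlim_compose[OF lim])
  moreover have "\<forall>\<^sub>F x in at_top. g (Z x) = f x"
    unfolding eventually_at_top_linorder using Z comp by metis
  ultimately show ?thesis
    by (rule Lim_transform_eventually)
qed

text \<open>Raise \<open>exp (- z) / H z powr (\<gamma> - 1) \<longlongrightarrow> 1\<close> to the power \<open>1 / (\<gamma> - 1)\<close>.\<close>
lemma exp_asymptotic_of_power_asymptotic: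
  fixes f H :: "real \<Rightarrow> real" and \<gamma> :: real
  assumes \<gamma>: "\<gamma> < 1"
    and top: "filterlim H at_top at_top"
    and comp: "\<And>z. f (H z) = exp (- z)"
    and lim: "((\<lambda>x. f x / x powr (\<gamma> - 1)) \<longlongrightarrow> 1) at_top"
  shows "((\<lambda>z. exp (z / (1 - \<gamma>)) / H z) \<longlongrightarrow> 1) at_top"
proof -
  have "((\<lambda>z. exp (- z) / H z powr (\<gamma> - 1)) \<longlongrightarrow> 1) at_top"
    using filterlim_compose[OF lim top] by (simp add: comp)
  then have limp: "((\<lambda>z. (exp (- z) / H z powr (\<gamma> - 1)) powr (1 / (\<gamma> - 1))) \<longlongrightarrow> 1) at_top"
    using tendsto_powr[of _ 1 _ "\<lambda>_. 1 / (\<gamma> - 1)"] by fastforce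
  have pow_eq: "(exp (- z) / H z powr (\<gamma> - 1)) powr (1 / (\<gamma> - 1)) = exp (z / (1 - \<gamma>)) / H z"
    if "0 < H z" for z
  proof -
    have "(exp (- z) / H z powr (\<gamma> - 1)) powr (1 / (\<gamma> - 1))
        = exp ((1 / (\<gamma> - 1)) * (- z - (\<gamma> - 1) * ln (H z)))"
      using that by (simp add: powr_def ln_div)
    also have "(1 / (\<gamma> - 1)) * (- z - (\<gamma> - 1) * ln (H z)) = z / (1 - \<gamma>) - ln (H z)"
      using \<gamma> by (simp add: field_simps)
    finally show ?thesis
      using that by (simp add: exp_diff)
  qed
  have "\<forall>\<^sub>F z in at_top. 0 < H z"
    using top by (simp add: filterlim_at_top_dense)
  then have "\<forall>\<^sub>F z in at_top.
      (exp (- z) / H z powr (\<gamma> - 1)) powr (1 / (\<gamma> - 1)) = exp (z / (1 - \<gamma>)) / H z"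
    using pow_eq by (auto elim: eventually_mono)
  with limp show ?thesis
    by (auto intro: Lim_transform_eventually)
qed

lemma neg_ratio_eq_derivative_of_exp_composition:
  fixes f H :: "real \<Rightarrow> real"
  assumes H: "(H has_real_derivative D) (at z)"
    and f: "(f has_real_derivative f') (at (H z))"
    and comp: "\<And>w. f (H w) = exp (- w + a)"
    and "D \<noteq> 0"
  shows "- f (H z) / f' = D"
proof -
  have "((\<lambda>w. f (H w)) has_real_derivative f' * D) (at z)"
    by (rule DERIV_chain2[OF f H])
  moreover have "((\<lambda>w. f (H w)) has_real_derivative - exp (- z + a)) (at z)"
    unfolding comp by (auto intro!: derivative_eq_intros)
  ultimately have "f' * D = - f (H z)"
    using DERIV_unique comp by metis
  moreover have "f (H z) \<noteq> 0"
    by (simp add: comp)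
  ultimately have "f' \<noteq> 0"
    by auto
  with \<open>f' * D = - f (H z)\<close> show ?thesis
    by (simp add: field_simps)
qed

definition hfun_z :: "real measure \<Rightarrow> real \<Rightarrow> real \<Rightarrow> real" where
  "hfun_z \<mu> z t = (\<integral>y. y * exp (y * z - y\<^sup>2 * t / 2) \<partial>\<mu>)"

locale exp_moment_measure = finite_measure \<mu> for \<mu> :: "real measure" +
  assumes sets_eq_borel: "sets \<mu> = sets borel"
    and nonzero: "emeasure \<mu> (space \<mu>) \<noteq> 0"
    and null_nonpos: "emeasure \<mu> {..0} = 0"
    and integrable_moment: "\<And>z. integrable \<mu> (\<lambda>y. y * exp (y * z))"
begin

lemma borel_measurable_from_borel: "f \<in> borel_measurable borel \<Longrightarrow> f \<in> borel_measurable \<mu>"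
  using measurable_cong_sets[OF sets_eq_borel refl, of borel] by blast

lemma space_eq_UNIV: "space \<mu> = UNIV"
  using sets_eq_imp_space_eq[OF sets_eq_borel] by simp

lemma sets_borel_in: "A \<in> sets borel \<Longrightarrow> A \<in> sets \<mu>"
  using sets_eq_borel by simp

lemma AE_pos: "AE y in \<mu>. 0 < y"
  using null_nonpos by (intro AE_I'[of "{..0}"]) (auto simp: null_sets_def sets_borel_in)

lemma integrable_indicator_const: "integrable \<mu> (\<lambda>y. indicator {c} y * (a :: real))"
  by (intro integrable_mult_left integrable_real_indicator)
    (auto simp: sets_borel_in less_top[symmetric] emeasure_finite)

lemma integrable_exp: "integrable \<mu> (\<lambda>y. exp (y * z))"
proof (rule Bochner_Integration.integrable_bound)
  show "integrable \<mu> (\<lambda>y. exp \<bar>z\<bar> + y * exp (y * z))"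
    by (intro Bochner_Integration.integrable_add integrable_moment integrable_const)
  show "(\<lambda>y. exp (y * z)) \<in> borel_measurable \<mu>"
    by (intro borel_measurable_from_borel) measurable
  show "AE y in \<mu>. norm (exp (y * z)) \<le> norm (exp \<bar>z\<bar> + y * exp (y * z))"
    using AE_pos
  proof eventually_elim
    case (elim y)
    show ?case
    proof (cases "y \<ge> 1")
      case True
      then have "exp (y * z) \<le> y * exp (y * z)" by simp
      then have "exp (y * z) \<le> exp \<bar>z\<bar> + y * exp (y * z)"
        using exp_gt_zero[of "\<bar>z\<bar>"] by linarith
      then show ?thesis using elim by simp
    next
      case False
      have "y * z \<le> y * \<bar>z\<bar>"
        using elim by (intro mult_left_mono) auto
      moreover have "y * \<bar>z\<bar> \<le> \<bar>z\<bar>"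
        using False elim by (intro mult_left_le_one_le) auto
      ultimately have "y * z \<le> \<bar>z\<bar>"
        by linarith
      then show ?thesis using elim by (simp add: add_increasing2)
    qed
  qed
qed

lemma integrable_shifted_exp: "integrable \<mu> (\<lambda>y. exp ((y - b) * z))"
  using integrable_exp[of z] by (simp add: left_diff_distrib exp_diff)

lemma integrable_hfun:
  assumes "0 \<le> t" shows "integrable \<mu> (\<lambda>y. exp (y * z - y\<^sup>2 * t / 2))"
  using assms by (intro Bochner_Integration.integrable_bound[OF integrable_exp[of z]] AE_I2
      borel_measurable_from_borel) auto

lemma integrable_hfun_z:
  assumes "0 \<le> t" shows "integrable \<mu> (\<lambda>y. y * exp (y * z - y\<^sup>2 * t / 2))"
  using assms by (intro Bochner_Integration.integrable_bound[OF integrable_moment[of z]] AE_I2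
      borel_measurable_from_borel) (auto simp: abs_mult mult_left_mono)

lemma hfun_has_real_derivative:
  assumes t: "0 \<le> t"
  shows "((\<lambda>z. hfun \<mu> z t) has_real_derivative hfun_z \<mu> z t) (at z)"
  unfolding has_field_derivative_iff tendsto_at_iff_sequentially
proof (intro allI impI)
  fix X :: "nat \<Rightarrow> real" assume X: "\<forall>i. X i \<in> UNIV - {z}" "X \<longlonglongrightarrow> z"
  obtain K where K: "\<And>n. norm (X n) \<le> K"
    using X(2) by (metis convergentI convergent_imp_Bseq BseqE)
  define M where "M = max K z"
  have M: "\<And>n. X n \<le> M" "z \<le> M"
    using K unfolding M_def by (auto simp: abs_le_iff intro: le_max_iff_disj[THEN iffD2])
  define q where "q w y = (exp (y * w - y\<^sup>2 * t / 2) - exp (y * z - y\<^sup>2 * t / 2)) / (w - z)"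
    for w y
  have quotient: "(hfun \<mu> w t - hfun \<mu> z t) / (w - z) = (\<integral>y. q w y \<partial>\<mu>)" for w
    unfolding q_def hfun_def
    by (simp add: Bochner_Integration.integral_diff[OF integrable_hfun[OF t] integrable_hfun[OF t]])
  have "(\<lambda>i. \<integral>y. q (X i) y \<partial>\<mu>) \<longlonglongrightarrow> hfun_z \<mu> z t"
    unfolding hfun_z_def
  proof (rule integral_dominated_convergence[where w="\<lambda>y. y * exp (y * M)"])
    show "(\<lambda>y. y * exp (y * z - y\<^sup>2 * t / 2)) \<in> borel_measurable \<mu>"
      by (intro borel_measurable_from_borel) measurable
    show "q (X i) \<in> borel_measurable \<mu>" for i
      unfolding q_def by (intro borel_measurable_from_borel) measurable
    show "integrable \<mu> (\<lambda>y. y * exp (y * M))"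
      by (rule integrable_moment)
    show "AE y in \<mu>. (\<lambda>i. q (X i) y) \<longlonglongrightarrow> y * exp (y * z - y\<^sup>2 * t / 2)"
    proof (intro AE_I2)
      fix y :: real
      have "((\<lambda>w. exp (y * w - y\<^sup>2 * t / 2)) has_real_derivative
          y * exp (y * z - y\<^sup>2 * t / 2)) (at z)"
        by (auto intro!: derivative_eq_intros)
      then have "((\<lambda>w. q w y) \<longlongrightarrow> y * exp (y * z - y\<^sup>2 * t / 2)) (at z)"
        unfolding has_field_derivative_iff q_def .
      then show "(\<lambda>i. q (X i) y) \<longlonglongrightarrow> y * exp (y * z - y\<^sup>2 * t / 2)"
        using X unfolding tendsto_at_iff_sequentially o_def by blast
    qed
    show "AE y in \<mu>. norm (q (X i) y) \<le> y * exp (y * M)" for i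
      using AE_pos
    proof eventually_elim
      case (elim y)
      show ?case
        unfolding q_def real_norm_def
        using elim X(1) M t by (intro exp_difference_quotient_bound) auto
    qed
  qed
  then show "((\<lambda>w. (hfun \<mu> w t - hfun \<mu> z t) / (w - z)) \<circ> X) \<longlonglongrightarrow> hfun_z \<mu> z t"
    by (simp add: o_def quotient)
qed

lemma hfun_z_nonneg: "0 \<le> t \<Longrightarrow> 0 \<le> hfun_z \<mu> z t"
  unfolding hfun_z_def using AE_pos by (intro integral_nonneg_AE) (auto elim: eventually_mono)

lemma mono_hfun:
  assumes "0 \<le> t" shows "mono (\<lambda>z. hfun \<mu> z t)"
proof (rule monoI)
  fix a b :: real assume "a \<le> b"
  then show "hfun \<mu> a t \<le> hfun \<mu> b t"
  proof (rule DERIV_nonneg_imp_nondecreasing)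
    fix x show "\<exists>d. ((\<lambda>z. hfun \<mu> z t) has_real_derivative d) (at x) \<and> 0 \<le> d"
      using hfun_has_real_derivative[OF assms] hfun_z_nonneg[OF assms] by blast
  qed
qed

lemma continuous_on_hfun:
  assumes "0 \<le> t" shows "continuous_on UNIV (\<lambda>z. hfun \<mu> z t)"
  by (intro continuous_at_imp_continuous_on ballI DERIV_isCont[OF hfun_has_real_derivative[OF assms]])

lemma hfun_ge_atom:
  assumes "0 \<le> t"
  shows "measure \<mu> {c} * exp (c * z - c\<^sup>2 * t / 2) \<le> hfun \<mu> z t"
proof -
  have "(\<integral>y. indicator {c} y * exp (c * z - c\<^sup>2 * t / 2) \<partial>\<mu>) \<le> hfun \<mu> z t"
    unfolding hfun_def
    by (rule integral_mono[OF integrable_indicator_const integrable_hfun[OF assms]])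
      (auto simp: indicator_def)
  then show ?thesis
    by (simp add: sets_borel_in)
qed

lemma hfun_z_ge_atom:
  assumes "0 \<le> t"
  shows "measure \<mu> {c} * (c * exp (c * z - c\<^sup>2 * t / 2)) \<le> hfun_z \<mu> z t"
proof -
  have "(\<integral>y. indicator {c} y * (c * exp (c * z - c\<^sup>2 * t / 2)) \<partial>\<mu>) \<le> hfun_z \<mu> z t"
    unfolding hfun_z_def
    using AE_pos
    by (intro integral_mono_AE[OF integrable_indicator_const integrable_hfun_z[OF assms]])
      (auto simp: indicator_def elim: eventually_mono)
  then show ?thesis
    by (simp add: sets_borel_in)
qed

lemma measure_atLeast_pos_of_emeasure_greaterThan:
  assumes "emeasure \<mu> {b<..} \<noteq> 0"
  shows "\<exists>e>0. 0 < measure \<mu> {b + e..}"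
proof (rule ccontr)
  assume "\<not> ?thesis"
  then have "measure \<mu> {b + 1 / Suc n..} = 0" for n :: nat
    using measure_nonneg[of \<mu> "{b + 1 / Suc n..}"] by (metis of_nat_0_less_iff zero_less_Suc
        divide_pos_pos zero_less_one order_le_less)
  then have "(\<Union>n::nat. {b + 1 / Suc n..}) \<in> null_sets \<mu>"
    by (intro null_sets_UN) (auto simp: null_sets_def sets_borel_in emeasure_eq_measure)
  moreover have "(\<Union>n::nat. {b + 1 / Suc n..}) = {b<..}"
  proof (intro set_eqI iffI)
    fix x assume "x \<in> {b<..}"
    then obtain n :: nat where "1 / Suc n < x - b"
      by (metis greaterThan_iff diff_gt_0_iff_gt nat_approx_posE)
    then have "b + 1 / Suc n \<le> x" by simp
    then show "x \<in> (\<Union>n::nat. {b + 1 / Suc n..})" by blast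
  next
    fix x assume "x \<in> (\<Union>n::nat. {b + 1 / Suc n..})"
    then obtain n :: nat where "b + 1 / Suc n \<le> x" by auto
    moreover have "0 < 1 / real (Suc n)" by simp
    ultimately have "b < x" by linarith
    then show "x \<in> {b<..}" by simp
  qed
  ultimately show False
    using assms by (simp add: null_setsD1)
qed

lemma shifted_laplace_tendsto_at_top:
  assumes "emeasure \<mu> {b<..} \<noteq> 0"
  shows "filterlim (\<lambda>z. \<integral>y. exp ((y - b) * z) \<partial>\<mu>) at_top at_top"
proof -
  obtain e where e: "0 < e" "0 < measure \<mu> {b + e..}"
    using measure_atLeast_pos_of_emeasure_greaterThan[OF assms] by blast
  have lower: "measure \<mu> {b + e..} * exp (e * z) \<le> (\<integral>y. exp ((y - b) * z) \<partial>\<mu>)" if "0 \<le> z" for z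
  proof -
    have "(\<integral>y. indicator {b + e..} y * exp (e * z) \<partial>\<mu>) \<le> (\<integral>y. exp ((y - b) * z) \<partial>\<mu>)"
      using that
      by (intro integral_mono integrable_shifted_exp integrable_mult_left integrable_real_indicator)
        (auto simp: sets_borel_in less_top[symmetric] emeasure_finite indicator_def mult_right_mono)
    then show ?thesis
      by (simp add: sets_borel_in)
  qed
  have "filterlim (\<lambda>z. measure \<mu> {b + e..} * exp (e * z)) at_top at_top"
    using e by real_asymp
  then show ?thesis
    by (rule filterlim_at_top_mono) (use lower in \<open>auto simp: eventually_at_top_linorder\<close>)
qed

lemma hfun_zero_tendsto_at_top: "filterlim (\<lambda>z. hfun \<mu> z 0) at_top at_top"
proof -
  have "emeasure \<mu> {0<..} \<noteq> 0"
  proof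
    assume "emeasure \<mu> {0<..} = 0"
    then have "{0<..} \<union> {..0} \<in> null_sets \<mu>"
      using null_nonpos by (intro null_sets.Un) (auto simp: null_sets_def sets_borel_in)
    moreover have "{0<..} \<union> {..0::real} = space \<mu>"
      by (auto simp: space_eq_UNIV)
    ultimately show False
      using nonzero by (simp add: null_setsD1)
  qed
  then show ?thesis
    using shifted_laplace_tendsto_at_top[of 0] by (simp add: hfun_def)
qed

text \<open>On \<open>(0, c]\<close> the weights \<open>exp ((y - c) * z)\<close> are bounded by \<open>1\<close> and tend to the
  indicator of \<open>{c}\<close>, so dominated convergence applies.\<close>
lemma shifted_laplace_tendsto_atom:
  assumes c: "AE y in \<mu>. y \<le> c" and g: "g \<in> borel_measurable borel"
    and K: "\<And>y. 0 < y \<Longrightarrow> y \<le> c \<Longrightarrow> \<bar>g y\<bar> \<le> K"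
  shows "((\<lambda>z. \<integral>y. g y * exp ((y - c) * z) \<partial>\<mu>) \<longlongrightarrow> measure \<mu> {c} * g c) at_top"
proof -
  have "((\<lambda>z. \<integral>y. g y * exp ((y - c) * z) \<partial>\<mu>) \<longlongrightarrow> (\<integral>y. indicator {c} y * g c \<partial>\<mu>)) at_top"
  proof (rule integral_dominated_convergence_at_top[where w="\<lambda>_. K"])
    show "(\<lambda>y. indicator {c} y * g c) \<in> borel_measurable \<mu>"
      by (intro borel_measurable_from_borel) measurable
    show "(\<lambda>y. g y * exp ((y - c) * z)) \<in> borel_measurable \<mu>" for z
      by (intro borel_measurable_from_borel borel_measurable_times[OF g]
          borel_measurable_continuous_onI continuous_intros)
    show "integrable \<mu> (\<lambda>_. K)"
      by simp
    show "AE y in \<mu>. ((\<lambda>z. g y * exp ((y - c) * z)) \<longlongrightarrow> indicator {c} y * g c) at_top"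
      using AE_pos c
    proof eventually_elim
      case (elim y)
      show ?case
      proof (cases "y = c")
        case False
        then have "((\<lambda>z. exp ((y - c) * z)) \<longlongrightarrow> 0) at_top"
          using elim by real_asymp
        then show ?thesis
          using False tendsto_mult_right_zero by fastforce
      qed simp
    qed
    show "\<forall>\<^sub>F z in at_top. AE y in \<mu>. norm (g y * exp ((y - c) * z)) \<le> K"
      unfolding eventually_at_top_linorder
    proof (intro exI[of _ 0] allI impI)
      fix z :: real assume "0 \<le> z"
      show "AE y in \<mu>. norm (g y * exp ((y - c) * z)) \<le> K"
        using AE_pos c
      proof eventually_elim
        case (elim y)
        have "exp ((y - c) * z) \<le> 1"
          using elim \<open>0 \<le> z\<close> by (simp add: mult_nonpos_nonneg)
        then have "\<bar>g y\<bar> * exp ((y - c) * z) \<le> K * 1"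
          using K[OF elim] by (intro mult_mono) auto
        then show ?case
          by (simp add: abs_mult)
      qed
    qed
  qed
  then show ?thesis
    by (simp add: sets_borel_in space_eq_UNIV)
qed

lemma shifted_laplace_eq: "(\<integral>y. exp ((y - c) * z) \<partial>\<mu>) = hfun \<mu> z 0 / exp (c * z)"
  unfolding hfun_def by (simp add: left_diff_distrib exp_diff)

lemma atom_of_laplace_asymptotic:
  assumes lim: "((\<lambda>z. exp (c * z) / hfun \<mu> z 0) \<longlongrightarrow> 1) at_top"
  shows "AE y in \<mu>. y \<le> c" "measure \<mu> {c} = 1"
proof -
  have L: "((\<lambda>z. \<integral>y. exp ((y - c) * z) \<partial>\<mu>) \<longlongrightarrow> 1) at_top"
    using tendsto_inverse[OF lim] by (simp add: shifted_laplace_eq)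
  have "emeasure \<mu> {c<..} = 0"
  proof (rule ccontr)
    assume "emeasure \<mu> {c<..} \<noteq> 0"
    then have "filterlim (\<lambda>z. \<integral>y. exp ((y - c) * z) \<partial>\<mu>) at_infinity at_top"
      by (intro filterlim_at_top_imp_at_infinity shifted_laplace_tendsto_at_top)
    then show False
      using not_tendsto_and_filterlim_at_infinity[OF _ L] by simp
  qed
  then show A: "AE y in \<mu>. y \<le> c"
    by (intro AE_I'[of "{c<..}"]) (auto simp: null_sets_def sets_borel_in)
  have "((\<lambda>z. \<integral>y. 1 * exp ((y - c) * z) \<partial>\<mu>) \<longlongrightarrow> measure \<mu> {c} * 1) at_top"
    by (rule shifted_laplace_tendsto_atom[OF A]) auto
  then show "measure \<mu> {c} = 1"
    using tendsto_unique[OF trivial_limit_at_top_linorder _ L] by simp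
qed

text \<open>After division by \<open>exp (c * z)\<close>, numerator and denominator converge to their
  contributions from the atom at \<open>c\<close>.\<close>
lemma hfun_z_div_hfun_tendsto:
  assumes c: "AE y in \<mu>. y \<le> c" and atom: "measure \<mu> {c} \<noteq> 0" and t: "0 \<le> t"
  shows "((\<lambda>z. hfun_z \<mu> z t / hfun \<mu> z t) \<longlongrightarrow> c) at_top"
proof -
  have weight: "exp (- (y\<^sup>2 * t / 2)) * exp ((y - c) * z) = exp (y * z - y\<^sup>2 * t / 2) / exp (c * z)"
    for y z :: real
    by (simp add: algebra_simps flip: exp_add exp_diff)
  have "((\<lambda>z. \<integral>y. exp (- (y\<^sup>2 * t / 2)) * exp ((y - c) * z) \<partial>\<mu>)
      \<longlongrightarrow> measure \<mu> {c} * exp (- (c\<^sup>2 * t / 2))) at_top"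
    using t by (intro shifted_laplace_tendsto_atom[OF c, where K=1]) auto
  then have den: "((\<lambda>z. hfun \<mu> z t / exp (c * z)) \<longlongrightarrow> measure \<mu> {c} * exp (- (c\<^sup>2 * t / 2))) at_top"
    by (simp add: weight hfun_def)
  have "((\<lambda>z. \<integral>y. (y * exp (- (y\<^sup>2 * t / 2))) * exp ((y - c) * z) \<partial>\<mu>)
      \<longlongrightarrow> measure \<mu> {c} * (c * exp (- (c\<^sup>2 * t / 2)))) at_top"
  proof (rule shifted_laplace_tendsto_atom[OF c, where K=c])
    fix y :: real assume y: "0 < y" "y \<le> c"
    have "y * exp (- (y\<^sup>2 * t / 2)) \<le> c * 1"
      using y t by (intro mult_mono) auto
    then show "\<bar>y * exp (- (y\<^sup>2 * t / 2))\<bar> \<le> c"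
      using y by (simp add: abs_mult)
  qed measurable
  then have num: "((\<lambda>z. hfun_z \<mu> z t / exp (c * z))
      \<longlongrightarrow> measure \<mu> {c} * (c * exp (- (c\<^sup>2 * t / 2)))) at_top"
    by (simp add: mult.assoc weight hfun_z_def)
  have "((\<lambda>z. (hfun_z \<mu> z t / exp (c * z)) / (hfun \<mu> z t / exp (c * z)))
      \<longlongrightarrow> (measure \<mu> {c} * (c * exp (- (c\<^sup>2 * t / 2)))) / (measure \<mu> {c} * exp (- (c\<^sup>2 * t / 2)))) at_top"
    using atom by (intro tendsto_divide[OF num den]) simp
  then show ?thesis
    using atom by simp
qed

lemma hfun_tendsto_at_top_of_atom:
  assumes "0 < c" "0 < measure \<mu> {c}" "0 \<le> t"
  shows "filterlim (\<lambda>z. hfun \<mu> z t) at_top at_top"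
proof (rule filterlim_at_top_mono)
  show "filterlim (\<lambda>z. measure \<mu> {c} * exp (c * z - c\<^sup>2 * t / 2)) at_top at_top"
    using assms by real_asymp
qed (use hfun_ge_atom[OF assms(3)] in auto)

lemma hfun_pos_of_atom:
  assumes "0 < measure \<mu> {c}" "0 \<le> t"
  shows "0 < hfun \<mu> z t"
  using hfun_ge_atom[OF assms(2), of c z] assms(1)
  by (metis exp_gt_zero mult_pos_pos order_less_le_trans)

lemma hfun_z_pos_of_atom:
  assumes "0 < c" "0 < measure \<mu> {c}" "0 \<le> t"
  shows "0 < hfun_z \<mu> z t"
  using hfun_z_ge_atom[OF assms(3), of c z] assms(1,2)
  by (metis exp_gt_zero mult_pos_pos order_less_le_trans)

end

theorem proposition3:
  fixes \<mu> :: "real measure"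
    and u ux uxx :: "real \<Rightarrow> real \<Rightarrow> real"
    and \<gamma> t0 :: real
  assumes mu_sets: "sets \<mu> = sets borel"
    and mu_finite: "finite_measure \<mu>"
    and mu_nonzero: "emeasure \<mu> (space \<mu>) \<noteq> 0"
    and mu_support: "emeasure \<mu> {..0} = 0"
    and mu_int: "\<And>z. integrable \<mu> (\<lambda>y. y * exp (y * z))"
    and u_x: "\<And>x t. 0 < x \<Longrightarrow> 0 \<le> t \<Longrightarrow> ((\<lambda>x'. u x' t) has_real_derivative ux x t) (at x)"
    and u_xx: "\<And>x t. 0 < x \<Longrightarrow> 0 \<le> t \<Longrightarrow> ((\<lambda>x'. ux x' t) has_real_derivative uxx x t) (at x)"
    and u_incr: "\<And>t. 0 \<le> t \<Longrightarrow> strict_mono_on {0<..} (\<lambda>x. u x t)"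
    and u_conc: "\<And>t. 0 \<le> t \<Longrightarrow> strictly_concave_on {0<..} (\<lambda>x. u x t)"
    and u_pde: "\<And>x t. 0 < x \<Longrightarrow> 0 \<le> t \<Longrightarrow>
       ((\<lambda>s. u x s) has_real_derivative ((ux x t)\<^sup>2 / (2 * uxx x t))) (at t within {0..})"
    and u_h: "\<And>z t. 0 \<le> t \<Longrightarrow> ux (hfun \<mu> z t) t = exp (- z + t / 2)"
    and gamma: "\<gamma> < 1"
    and lim0: "((\<lambda>x. ux x 0 / x powr (\<gamma> - 1)) \<longlongrightarrow> 1) at_top"
    and t0: "0 \<le> t0"
  shows "((\<lambda>x. (- ux x t0 / uxx x t0) / x) \<longlongrightarrow> 1 / (1 - \<gamma>)) at_top"
proof -
  interpret exp_moment_measure \<mu>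
    using mu_finite mu_sets mu_nonzero mu_support mu_int
    by (auto simp: exp_moment_measure_def exp_moment_measure_axioms_def)
  define c where "c = 1 / (1 - \<gamma>)"
  have c: "0 < c"
    using gamma by (simp add: c_def)
  have "((\<lambda>z. exp (c * z) / hfun \<mu> z 0) \<longlongrightarrow> 1) at_top"
    using exp_asymptotic_of_power_asymptotic[OF gamma hfun_zero_tendsto_at_top _ lim0] u_h[of 0]
    by (simp add: c_def)
  then have support: "AE y in \<mu>. y \<le> c" and atom: "measure \<mu> {c} = 1"
    by (fact atom_of_laplace_asymptotic)+
  have atom_pos: "0 < measure \<mu> {c}"
    by (simp add: atom)
  have risk_tolerance: "- ux (hfun \<mu> z t0) t0 / uxx (hfun \<mu> z t0) t0 = hfun_z \<mu> z t0" for z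
    using neg_ratio_eq_derivative_of_exp_composition[OF hfun_has_real_derivative[OF t0]
        u_xx[OF hfun_pos_of_atom[OF atom_pos t0] t0] u_h[OF t0]]
      hfun_z_pos_of_atom[OF c atom_pos t0, of z] by simp
  have ratio: "((\<lambda>z. hfun_z \<mu> z t0 / hfun \<mu> z t0) \<longlongrightarrow> c) at_top"
    using hfun_z_div_hfun_tendsto[OF support _ t0] atom by simp
  have top: "filterlim (\<lambda>z. hfun \<mu> z t0) at_top at_top"
    by (rule hfun_tendsto_at_top_of_atom[OF c atom_pos t0])
  have "((\<lambda>x. (- ux x t0 / uxx x t0) / x) \<longlongrightarrow> c) at_top"
    by (rule tendsto_at_top_reparametrize[OF continuous_on_hfun[OF t0] mono_hfun[OF t0] top ratio])
      (simp only: risk_tolerance)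
  then show ?thesis
    by (simp add: c_def)
qed

end
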